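(* Let $k$ be an algebraically closed field, $\Lambda$ a connected locally bounded $k$-category, and $G$ a group of $k$-linear automorphisms of $\Lambda$ which acts freely on $[\mathrm{ind}\Lambda]$. Let $L$ be a line in $\Lambda$ and $B_L$ its associated $\Lambda$-module. Then $G_L=G_{B_L}$.
   Context: A locally bounded $k$-category: endomorphism algebras local, distinct objects non-isomorphic, and for each object $x$, $\sum_y\dim_k\Lambda(x,y)<\infty$, $\sum_y\dim_k\Lambda(y,x)<\infty$. A $\Lambda$-module is a contravariant $k$-linear functor $\Lambda\to\mathrm{MOD}\,k$; $\mathrm{supp}M$ is the full subcategory of objects $x$ with $M(x)\neq0$. $[\mathrm{ind}\Lambda]$ is the set of isomorphism classes of finite dimensional indecomposable $\Lambda$-modules; for $g\in G$, ${}^gM=M\circ g^{-1}$; $G$ acts freely on $[\mathrm{ind}\Lambda]$ if ${}^gM\not\cong M$ for every indecomposable finite dimensional $M$ and $1\neq g\in G$. A full subcategory $L$ is convex if each path in the ordinary quiver of $\Lambda$ with source and terminal in $L$ has all its points in $L$. A line is a convex full subcategory isomorphic to the path category of a linear quiver (of type $A_n$, $A_\infty$ or $A_\infty^\infty$). For a line $L$, $B_L$ is the $\Lambda$-module with $B_L(x)=k$ for $x\in L$, $B_L(\alpha)\neq0$ for every nonzero morphism $\alpha$ of $L$, and $B_L(x)=0$ for $x\notin L$ (unique up to isomorphism). $G_L=\{g\in G\mid gL=L\}$ and $G_M=\{g\in G\mid {}^gM\cong M\}$. *)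

theory Defs
  imports Main "HOL-Library.Function_Algebras" "HOL-Computational_Algebra.Polynomial"
begin

text \<open>All hom-spaces are subspaces of one
ambient k-vector space of type 'm with scalar multiplication sc.
Hom x y is the space of morphisms from x to y; cmp x y z b a is the composite
b after a, for a in Hom x y and b in Hom y z; idm x is the identity of x.\<close>

record ('k::field, 'o, 'm::ab_group_add) kcat =
  sc  :: "'k \<Rightarrow> 'm \<Rightarrow> 'm"
  Hom :: "'o \<Rightarrow> 'o \<Rightarrow> 'm set"
  cmp :: "'o \<Rightarrow> 'o \<Rightarrow> 'o \<Rightarrow> 'm \<Rightarrow> 'm \<Rightarrow> 'm"
  idm :: "'o \<Rightarrow> 'm"

definition linear_on ::
  "('k::field \<Rightarrow> 'a::ab_group_add \<Rightarrow> 'a) \<Rightarrow> ('k \<Rightarrow> 'b::ab_group_add \<Rightarrow> 'b) \<Rightarrow> 'a set \<Rightarrow> 'b set \<Rightarrow> ('a \<Rightarrow> 'b) \<Rightarrow> bool" where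
  "linear_on s1 s2 S T f \<longleftrightarrow> f ` S \<subseteq> T \<and>
     (\<forall>u\<in>S. \<forall>v\<in>S. f (u + v) = f u + f v) \<and> (\<forall>c. \<forall>u\<in>S. f (s1 c u) = s2 c (f u))"

definition is_kcat :: "('k::field, 'o, 'm::ab_group_add) kcat \<Rightarrow> bool" where
  "is_kcat C \<longleftrightarrow> vector_space (sc C) \<and>
     (\<forall>x y. module.subspace (sc C) (Hom C x y)) \<and>
     (\<forall>x. idm C x \<in> Hom C x x) \<and>
     (\<forall>x y z. \<forall>a\<in>Hom C x y. \<forall>b\<in>Hom C y z. cmp C x y z b a \<in> Hom C x z) \<and>
     (\<forall>x y z. \<forall>a\<in>Hom C x y. linear_on (sc C) (sc C) (Hom C y z) (Hom C x z) (\<lambda>b. cmp C x y z b a)) \<and>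
     (\<forall>x y z. \<forall>b\<in>Hom C y z. linear_on (sc C) (sc C) (Hom C x y) (Hom C x z) (\<lambda>a. cmp C x y z b a)) \<and>
     (\<forall>w x y z. \<forall>a\<in>Hom C w x. \<forall>b\<in>Hom C x y. \<forall>c\<in>Hom C y z.
        cmp C w y z c (cmp C w x y b a) = cmp C w x z (cmp C x y z c b) a) \<and>
     (\<forall>x y. \<forall>a\<in>Hom C x y. cmp C x y y (idm C y) a = a \<and> cmp C x x y a (idm C x) = a)"

definition iso_mor :: "('k::field, 'o, 'm::ab_group_add) kcat \<Rightarrow> 'o \<Rightarrow> 'o \<Rightarrow> 'm \<Rightarrow> bool" where
  "iso_mor C x y a \<longleftrightarrow> a \<in> Hom C x y \<and>
     (\<exists>b\<in>Hom C y x. cmp C x y x b a = idm C x \<and> cmp C y x y a b = idm C y)"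

text \<open>End(x) is a local algebra: it is nonzero and the non-invertible elements are closed under sums.\<close>
definition local_end :: "('k::field, 'o, 'm::ab_group_add) kcat \<Rightarrow> 'o \<Rightarrow> bool" where
  "local_end C x \<longleftrightarrow> idm C x \<noteq> 0 \<and>
     (\<forall>a\<in>Hom C x x. \<forall>b\<in>Hom C x x. \<not> iso_mor C x x a \<and> \<not> iso_mor C x x b \<longrightarrow> \<not> iso_mor C x x (a + b))"

definition finite_dim_sp :: "('k::field \<Rightarrow> 'a::ab_group_add \<Rightarrow> 'a) \<Rightarrow> 'a set \<Rightarrow> bool" where
  "finite_dim_sp s S \<longleftrightarrow> (\<exists>B. finite B \<and> module.span s B = S)"

text \<open>The condition that the sums of dimensions are finite is written out as: only finitely
many nonzero hom-spaces from/to each object, each of them finite dimensional.\<close>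
definition locally_bounded :: "('k::field, 'o, 'm::ab_group_add) kcat \<Rightarrow> bool" where
  "locally_bounded C \<longleftrightarrow> is_kcat C \<and>
     (\<forall>x. local_end C x) \<and>
     (\<forall>x y. x \<noteq> y \<longrightarrow> \<not> (\<exists>a. iso_mor C x y a)) \<and>
     (\<forall>x. finite {y. Hom C x y \<noteq> {0}} \<and> finite {y. Hom C y x \<noteq> {0}}) \<and>
     (\<forall>x y. finite_dim_sp (sc C) (Hom C x y))"

definition connected_cat :: "('k::field, 'o, 'm::ab_group_add) kcat \<Rightarrow> bool" where
  "connected_cat C \<longleftrightarrow>
     (let R = {(x, y). Hom C x y \<noteq> {0}} in \<forall>x y. (x, y) \<in> (R \<union> R\<inverse>)\<^sup>*)"

definition rad :: "('k::field, 'o, 'm::ab_group_add) kcat \<Rightarrow> 'o \<Rightarrow> 'o \<Rightarrow> 'm set" where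
  "rad C x y = {a \<in> Hom C x y. \<forall>b\<in>Hom C y x. iso_mor C x x (idm C x - cmp C x y x b a)}"

definition rad2 :: "('k::field, 'o, 'm::ab_group_add) kcat \<Rightarrow> 'o \<Rightarrow> 'o \<Rightarrow> 'm set" where
  "rad2 C x y = module.span (sc C) {cmp C x z y b a | z a b. a \<in> rad C x z \<and> b \<in> rad C z y}"

text \<open>There is an arrow x to y in the ordinary quiver iff dim rad(x,y)/rad^2(x,y) > 0.\<close>
definition quiver_arrow :: "('k::field, 'o, 'm::ab_group_add) kcat \<Rightarrow> 'o \<Rightarrow> 'o \<Rightarrow> bool" where
  "quiver_arrow C x y \<longleftrightarrow> rad2 C x y \<noteq> rad C x y"

definition convex :: "('k::field, 'o, 'm::ab_group_add) kcat \<Rightarrow> 'o set \<Rightarrow> bool" where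
  "convex C L \<longleftrightarrow> (\<forall>ps. ps \<noteq> [] \<and> (\<forall>i. Suc i < length ps \<longrightarrow> quiver_arrow C (ps ! i) (ps ! Suc i))
      \<and> hd ps \<in> L \<and> last ps \<in> L \<longrightarrow> set ps \<subseteq> L)"

text \<open>Linear quivers: vertex set {0..<n} (n \<ge> 1, type A_n), {0..} (A_infinity) or all
integers (A_infinity^infinity); the edge between t and t+1 points from t to t+1 iff ori t.\<close>
definition linear_index :: "int set \<Rightarrow> bool" where
  "linear_index I \<longleftrightarrow> (\<exists>n::nat. n \<ge> 1 \<and> I = {0..<int n}) \<or> I = {0..} \<or> I = UNIV"

definition lq_path :: "(int \<Rightarrow> bool) \<Rightarrow> int \<Rightarrow> int \<Rightarrow> bool" where
  "lq_path ori i j \<longleftrightarrow> (i \<le> j \<and> (\<forall>t. i \<le> t \<and> t < j \<longrightarrow> ori t)) \<or> (j \<le> i \<and> (\<forall>t. j \<le> t \<and> t < i \<longrightarrow> \<not> ori t))"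

text \<open>Hom-spaces of the path category kQ of the linear quiver: k (spanned by the unique path)
if there is a path from i to j, zero otherwise; composition is multiplication of coefficients.\<close>
definition kQhom :: "(int \<Rightarrow> bool) \<Rightarrow> int \<Rightarrow> int \<Rightarrow> 'k::field set" where
  "kQhom ori i j = (if lq_path ori i j then UNIV else {0})"

text \<open>The full subcategory on L is isomorphic (as k-category) to the path category of a
linear quiver: phi is the bijection on objects, F i j the linear isomorphisms on hom-spaces.\<close>
definition is_line :: "('k::field, 'o, 'm::ab_group_add) kcat \<Rightarrow> 'o set \<Rightarrow> bool" where
  "is_line C L \<longleftrightarrow> convex C L \<and>
     (\<exists>I ori (phi :: int \<Rightarrow> 'o) (F :: int \<Rightarrow> int \<Rightarrow> 'k \<Rightarrow> 'm).
        linear_index I \<and> bij_betw phi I L \<and>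
        (\<forall>i\<in>I. \<forall>j\<in>I. linear_on (*) (sc C) (kQhom ori i j) (Hom C (phi i) (phi j)) (F i j) \<and>
                       bij_betw (F i j) (kQhom ori i j) (Hom C (phi i) (phi j))) \<and>
        (\<forall>i\<in>I. \<forall>j\<in>I. \<forall>l\<in>I. \<forall>c\<in>kQhom ori i j. \<forall>d\<in>kQhom ori j l.
            F i l (d * c) = cmp C (phi i) (phi j) (phi l) (F j l d) (F i j c)) \<and>
        (\<forall>i\<in>I. F i i 1 = idm C (phi i)))"

text \<open>A (right) module: a contravariant k-linear functor; Mob x is the space M(x) and
Mmap x y a : M(y) \<rightarrow> M(x) is M(a) for a in Hom x y.\<close>
record ('o, 'm, 'w) kmod =
  Mob  :: "'o \<Rightarrow> 'w set"
  Mmap :: "'o \<Rightarrow> 'o \<Rightarrow> 'm \<Rightarrow> 'w \<Rightarrow> 'w"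

definition is_module :: "('k::field, 'o, 'm::ab_group_add) kcat \<Rightarrow> ('k::field \<Rightarrow> 'w::ab_group_add \<Rightarrow> 'w) \<Rightarrow> ('o, 'm, 'w) kmod \<Rightarrow> bool" where
  "is_module C sw M \<longleftrightarrow>
     (\<forall>x. module.subspace sw (Mob M x)) \<and>
     (\<forall>x y. \<forall>a\<in>Hom C x y. linear_on sw sw (Mob M y) (Mob M x) (Mmap M x y a)) \<and>
     (\<forall>x y. \<forall>v\<in>Mob M y. linear_on (sc C) sw (Hom C x y) (Mob M x) (\<lambda>a. Mmap M x y a v)) \<and>
     (\<forall>x. \<forall>v\<in>Mob M x. Mmap M x x (idm C x) v = v) \<and>
     (\<forall>x y z. \<forall>a\<in>Hom C x y. \<forall>b\<in>Hom C y z. \<forall>v\<in>Mob M z.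
        Mmap M x z (cmp C x y z b a) v = Mmap M x y a (Mmap M y z b v))"

definition fin_dim_mod :: "('k::field \<Rightarrow> 'w::ab_group_add \<Rightarrow> 'w) \<Rightarrow> ('o, 'm, 'w) kmod \<Rightarrow> bool" where
  "fin_dim_mod sw M \<longleftrightarrow> finite {x. Mob M x \<noteq> {0}} \<and> (\<forall>x. finite_dim_sp sw (Mob M x))"

definition submodule :: "('k::field, 'o, 'm::ab_group_add) kcat \<Rightarrow> ('k::field \<Rightarrow> 'w::ab_group_add \<Rightarrow> 'w) \<Rightarrow> ('o, 'm, 'w) kmod \<Rightarrow> ('o \<Rightarrow> 'w set) \<Rightarrow> bool" where
  "submodule C sw M U \<longleftrightarrow> (\<forall>x. module.subspace sw (U x) \<and> U x \<subseteq> Mob M x) \<and>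
     (\<forall>x y. \<forall>a\<in>Hom C x y. \<forall>v\<in>U y. Mmap M x y a v \<in> U x)"

definition indecomposable :: "('k::field, 'o, 'm::ab_group_add) kcat \<Rightarrow> ('k::field \<Rightarrow> 'w::ab_group_add \<Rightarrow> 'w) \<Rightarrow> ('o, 'm, 'w) kmod \<Rightarrow> bool" where
  "indecomposable C sw M \<longleftrightarrow> (\<exists>x. Mob M x \<noteq> {0}) \<and>
     (\<forall>U V. submodule C sw M U \<and> submodule C sw M V \<and>
        (\<forall>x. U x \<inter> V x = {0} \<and> {u + v | u v. u \<in> U x \<and> v \<in> V x} = Mob M x)
        \<longrightarrow> (\<forall>x. U x = {0}) \<or> (\<forall>x. V x = {0}))"

definition mod_iso :: "('k::field, 'o, 'm::ab_group_add) kcat \<Rightarrow> ('k::field \<Rightarrow> 'w::ab_group_add \<Rightarrow> 'w) \<Rightarrow> ('o, 'm, 'w) kmod \<Rightarrow> ('o, 'm, 'w) kmod \<Rightarrow> bool" where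
  "mod_iso C sw M N \<longleftrightarrow> (\<exists>f. (\<forall>x. linear_on sw sw (Mob M x) (Mob N x) (f x) \<and> bij_betw (f x) (Mob M x) (Mob N x)) \<and>
     (\<forall>x y. \<forall>a\<in>Hom C x y. \<forall>v\<in>Mob M y. f x (Mmap M x y a v) = Mmap N x y a (f y v)))"

text \<open>Concrete ambient space for module values: k^(N) realised inside nat \<Rightarrow> k.
Every (finite or countable dimensional) k-vector space is isomorphic to a subspace of it.\<close>
definition fscale :: "'k::field \<Rightarrow> (nat \<Rightarrow> 'k) \<Rightarrow> (nat \<Rightarrow> 'k)" where
  "fscale c f = (\<lambda>n. c * f n)"

type_synonym ('o, 'm) aut = "('o \<Rightarrow> 'o) \<times> ('o \<Rightarrow> 'o \<Rightarrow> 'm \<Rightarrow> 'm)"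

definition is_aut :: "('k::field, 'o, 'm::ab_group_add) kcat \<Rightarrow> ('o, 'm) aut \<Rightarrow> bool" where
  "is_aut C g \<longleftrightarrow> bij (fst g) \<and>
     (\<forall>x y. linear_on (sc C) (sc C) (Hom C x y) (Hom C (fst g x) (fst g y)) (snd g x y) \<and>
            bij_betw (snd g x y) (Hom C x y) (Hom C (fst g x) (fst g y))) \<and>
     (\<forall>x y z. \<forall>a\<in>Hom C x y. \<forall>b\<in>Hom C y z.
        snd g x z (cmp C x y z b a) = cmp C (fst g x) (fst g y) (fst g z) (snd g y z b) (snd g x y a)) \<and>
     (\<forall>x. snd g x x (idm C x) = idm C (fst g x))"

definition aut_id :: "('o, 'm) aut" where
  "aut_id = (id, \<lambda>x y a. a)"

definition aut_comp :: "('o, 'm) aut \<Rightarrow> ('o, 'm) aut \<Rightarrow> ('o, 'm) aut" where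
  "aut_comp g h = (fst g \<circ> fst h, \<lambda>x y a. snd g (fst h x) (fst h y) (snd h x y a))"

text \<open>Equality of functors (values on non-morphisms are irrelevant).\<close>
definition aut_eq :: "('k::field, 'o, 'm::ab_group_add) kcat \<Rightarrow> ('o, 'm) aut \<Rightarrow> ('o, 'm) aut \<Rightarrow> bool" where
  "aut_eq C g h \<longleftrightarrow> fst g = fst h \<and> (\<forall>x y. \<forall>a\<in>Hom C x y. snd g x y a = snd h x y a)"

definition aut_group :: "('k::field, 'o, 'm::ab_group_add) kcat \<Rightarrow> ('o, 'm) aut set \<Rightarrow> bool" where
  "aut_group C G \<longleftrightarrow> (\<forall>g\<in>G. is_aut C g) \<and> (\<exists>e\<in>G. aut_eq C e aut_id) \<and>
     (\<forall>g\<in>G. \<forall>h\<in>G. \<exists>c\<in>G. aut_eq C c (aut_comp g h)) \<and>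
     (\<forall>g\<in>G. \<exists>h\<in>G. aut_eq C (aut_comp g h) aut_id)"

text \<open>The twisted module gM = M \<circ> g^{-1}.\<close>
definition twist :: "('k::field, 'o, 'm::ab_group_add) kcat \<Rightarrow> ('o, 'm) aut \<Rightarrow> ('o, 'm, 'w) kmod \<Rightarrow> ('o, 'm, 'w) kmod" where
  "twist C g M = \<lparr> Mob = (\<lambda>x. Mob M (inv (fst g) x)),
     Mmap = (\<lambda>x y a. Mmap M (inv (fst g) x) (inv (fst g) y)
                (inv_into (Hom C (inv (fst g) x) (inv (fst g) y)) (snd g (inv (fst g) x) (inv (fst g) y)) a)) \<rparr>"

definition acts_freely :: "('k::field, 'o, 'm::ab_group_add) kcat \<Rightarrow> ('o, 'm) aut set \<Rightarrow> bool" where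
  "acts_freely C G \<longleftrightarrow> (\<forall>M :: ('o, 'm, nat \<Rightarrow> 'k) kmod.
     is_module C fscale M \<and> fin_dim_mod fscale M \<and> indecomposable C fscale M \<longrightarrow>
     (\<forall>g\<in>G. \<not> aut_eq C g aut_id \<longrightarrow> \<not> mod_iso C fscale (twist C g M) M))"

definition stab_set :: "('o, 'm) aut set \<Rightarrow> 'o set \<Rightarrow> ('o, 'm) aut set" where
  "stab_set G L = {g \<in> G. fst g ` L = L}"

definition stab_mod :: "('k::field, 'o, 'm::ab_group_add) kcat \<Rightarrow> ('k::field \<Rightarrow> 'w::ab_group_add \<Rightarrow> 'w) \<Rightarrow> ('o, 'm) aut set \<Rightarrow> ('o, 'm, 'w) kmod \<Rightarrow> ('o, 'm) aut set" where
  "stab_mod C sw G M = {g \<in> G. mod_iso C sw (twist C g M) M}"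

definition is_BL :: "('k::field, 'o, 'm::ab_group_add) kcat \<Rightarrow> ('k::field \<Rightarrow> 'w::ab_group_add \<Rightarrow> 'w) \<Rightarrow> 'o set \<Rightarrow> ('o, 'm, 'w) kmod \<Rightarrow> bool" where
  "is_BL C sw L M \<longleftrightarrow> is_module C sw M \<and>
     (\<forall>x\<in>L. \<exists>v. v \<noteq> 0 \<and> Mob M x = module.span sw {v}) \<and>
     (\<forall>x. x \<notin> L \<longrightarrow> Mob M x = {0}) \<and>
     (\<forall>x\<in>L. \<forall>y\<in>L. \<forall>a\<in>Hom C x y. a \<noteq> 0 \<longrightarrow> (\<exists>v\<in>Mob M y. Mmap M x y a v \<noteq> 0))"

end

theory Submission
  imports Defs
begin

text \<open>If \<open>g\<close> maps \<open>L\<close> onto itself, the twisted module \<open>\<^sup>gB\<^sub>L\<close> again has the defining properties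
  of \<open>B\<^sub>L\<close>, and any two such modules are isomorphic: morphisms of \<open>L\<close> act on their one-dimensional
  spaces by nonzero scalars, and since paths in a linear quiver never change direction, the ratio of
  the two actions is a coboundary along \<open>\<int>\<close> and is absorbed by rescaling the basis vectors.
  Conversely an isomorphism \<open>\<^sup>gB\<^sub>L \<cong> B\<^sub>L\<close> preserves supports, and the support of \<open>\<^sup>gB\<^sub>L\<close> is \<open>g L\<close>.\<close>

lemma linear_on_into: "linear_on s1 s2 S T f \<Longrightarrow> u \<in> S \<Longrightarrow> f u \<in> T"
  unfolding linear_on_def by blast

lemma linear_on_add: "linear_on s1 s2 S T f \<Longrightarrow> u \<in> S \<Longrightarrow> v \<in> S \<Longrightarrow> f (u + v) = f u + f v"
  unfolding linear_on_def by blast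

lemma linear_on_scale: "linear_on s1 s2 S T f \<Longrightarrow> u \<in> S \<Longrightarrow> f (s1 c u) = s2 c (f u)"
  unfolding linear_on_def by blast

lemma linear_on_zero:
  assumes "linear_on s1 s2 S T f" "0 \<in> S"
  shows "f 0 = 0"
proof -
  have "f (0 + 0) = f 0 + f 0" using linear_on_add[OF assms(1,2,2)] .
  then show ?thesis by simp
qed

lemma linear_on_comp:
  "linear_on s1 s2 S T f \<Longrightarrow> linear_on s2 s3 T U g \<Longrightarrow> linear_on s1 s3 S U (g \<circ> f)"
  unfolding linear_on_def by (auto simp: image_subset_iff)

lemma linear_on_inv_into:
  assumes lin: "linear_on s1 s2 S T f" and bij: "bij_betw f S T"
    and add: "\<And>u v. u \<in> S \<Longrightarrow> v \<in> S \<Longrightarrow> u + v \<in> S"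
    and scale: "\<And>c u. u \<in> S \<Longrightarrow> s1 c u \<in> S"
  shows "linear_on s2 s1 T S (inv_into S f)"
proof -
  let ?h = "inv_into S f"
  have h_in: "?h v \<in> S" and f_h: "f (?h v) = v" if "v \<in> T" for v
    using that bij_betw_inv_into_right[OF bij] bij_betw_apply[OF bij_betw_inv_into[OF bij]] by auto
  have h_f: "?h (f u) = u" if "u \<in> S" for u
    using bij_betw_inv_into_left[OF bij that] .
  show ?thesis
    unfolding linear_on_def
  proof (intro conjI ballI allI subsetI)
    show "w \<in> S" if "w \<in> ?h ` T" for w using that h_in by blast
  next
    fix u v assume "u \<in> T" "v \<in> T"
    then have "?h (u + v) = ?h (f (?h u + ?h v))"
      using linear_on_add[OF lin] h_in f_h by simp
    then show "?h (u + v) = ?h u + ?h v" using h_f add h_in \<open>u \<in> T\<close> \<open>v \<in> T\<close> by simp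
  next
    fix c u assume "u \<in> T"
    then have "?h (s2 c u) = ?h (f (s1 c (?h u)))"
      using linear_on_scale[OF lin] h_in f_h by simp
    then show "?h (s2 c u) = s1 c (?h u)" using h_f scale h_in \<open>u \<in> T\<close> by simp
  qed
qed

lemma bij_betw_zero_singleton_iff:
  assumes bij: "bij_betw f A B" and "0 \<in> A" "0 \<in> B"
  shows "A = {0} \<longleftrightarrow> B = {0}"
proof
  assume "A = {0}"
  then have "B = {f 0}" using bij_betw_imp_surj_on[OF bij] by simp
  then show "B = {0}" using \<open>0 \<in> B\<close> by simp
next
  assume B: "B = {0}"
  have "a = 0" if "a \<in> A" for a
  proof (rule inj_onD[OF bij_betw_imp_inj_on[OF bij] _ that \<open>0 \<in> A\<close>])
    have "f a \<in> B" "f 0 \<in> B" using bij_betw_apply[OF bij] that \<open>0 \<in> A\<close> by auto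
    then show "f a = f 0" using B by simp
  qed
  then show "A = {0}" using \<open>0 \<in> A\<close> by blast
qed

lemma bij_image_eq_iff_inv_mem:
  assumes "bij f"
  shows "f ` L = L \<longleftrightarrow> (\<forall>x. inv f x \<in> L \<longleftrightarrow> x \<in> L)"
proof -
  have "inv f x \<in> L \<longleftrightarrow> x \<in> f ` L" for x
  proof
    assume "inv f x \<in> L"
    then show "x \<in> f ` L" using surj_f_inv_f[OF bij_is_surj[OF assms]] by (metis imageI)
  next
    assume "x \<in> f ` L"
    then show "inv f x \<in> L" using inv_f_f[OF bij_is_inj[OF assms]] by auto
  qed
  then show ?thesis by (auto simp: set_eq_iff)
qed

section \<open>Twisting by an automorphism\<close>

lemma
  assumes "is_kcat C"
  shows Hom_zero: "0 \<in> Hom C x y"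
    and Hom_add: "a \<in> Hom C x y \<Longrightarrow> b \<in> Hom C x y \<Longrightarrow> a + b \<in> Hom C x y"
    and Hom_scale: "a \<in> Hom C x y \<Longrightarrow> sc C c a \<in> Hom C x y"
    and Hom_idm: "idm C x \<in> Hom C x x"
    and Hom_cmp: "a \<in> Hom C x y \<Longrightarrow> b \<in> Hom C y z \<Longrightarrow> cmp C x y z b a \<in> Hom C x z"
proof -
  have "vector_space (sc C)" using assms unfolding is_kcat_def by simp
  then interpret module "sc C" by (simp add: module_iff_vector_space)
  have "subspace (Hom C x y)" using assms unfolding is_kcat_def by simp
  then show "0 \<in> Hom C x y" "a \<in> Hom C x y \<Longrightarrow> b \<in> Hom C x y \<Longrightarrow> a + b \<in> Hom C x y"
    "a \<in> Hom C x y \<Longrightarrow> sc C c a \<in> Hom C x y"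
    by (simp_all add: subspace_def)
  show "idm C x \<in> Hom C x x"
    "a \<in> Hom C x y \<Longrightarrow> b \<in> Hom C y z \<Longrightarrow> cmp C x y z b a \<in> Hom C x z"
    using assms unfolding is_kcat_def by simp_all
qed

lemma
  assumes "is_module C sw M"
  shows module_map_linear: "a \<in> Hom C x y \<Longrightarrow> linear_on sw sw (Mob M y) (Mob M x) (Mmap M x y a)"
    and module_map_linear_mor: "v \<in> Mob M y \<Longrightarrow> linear_on (sc C) sw (Hom C x y) (Mob M x) (\<lambda>a. Mmap M x y a v)"
    and module_map_idm: "v \<in> Mob M x \<Longrightarrow> Mmap M x x (idm C x) v = v"
    and module_map_cmp: "a \<in> Hom C x y \<Longrightarrow> b \<in> Hom C y z \<Longrightarrow> v \<in> Mob M z \<Longrightarrow>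
      Mmap M x z (cmp C x y z b a) v = Mmap M x y a (Mmap M y z b v)"
  using assms unfolding is_module_def by simp_all

lemma Mob_zero:
  assumes "module sw" "is_module C sw M"
  shows "0 \<in> Mob M x"
  using assms unfolding is_module_def module.subspace_def[OF assms(1)] by simp

lemma
  assumes "is_aut C g"
  shows aut_bij_obj: "bij (fst g)"
    and aut_bij_mor: "bij_betw (snd g x y) (Hom C x y) (Hom C (fst g x) (fst g y))"
    and aut_linear_mor: "linear_on (sc C) (sc C) (Hom C x y) (Hom C (fst g x) (fst g y)) (snd g x y)"
    and aut_cmp: "a \<in> Hom C x y \<Longrightarrow> b \<in> Hom C y z \<Longrightarrow>
      snd g x z (cmp C x y z b a) = cmp C (fst g x) (fst g y) (fst g z) (snd g y z b) (snd g x y a)"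
    and aut_idm: "snd g x x (idm C x) = idm C (fst g x)"
  using assms unfolding is_aut_def by simp_all

definition aut_inv_mor :: "('k::field, 'o, 'm::ab_group_add) kcat \<Rightarrow> ('o, 'm) aut \<Rightarrow> 'o \<Rightarrow> 'o \<Rightarrow> 'm \<Rightarrow> 'm" where
  "aut_inv_mor C g x y =
     inv_into (Hom C (inv (fst g) x) (inv (fst g) y)) (snd g (inv (fst g) x) (inv (fst g) y))"

lemma Mob_twist: "Mob (twist C g M) x = Mob M (inv (fst g) x)"
  unfolding twist_def by simp

lemma Mmap_twist:
  "Mmap (twist C g M) x y a = Mmap M (inv (fst g) x) (inv (fst g) y) (aut_inv_mor C g x y a)"
  unfolding twist_def aut_inv_mor_def by simp

context
  fixes C :: "('k::field, 'o, 'm::ab_group_add) kcat" and g :: "('o, 'm) aut"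
  assumes aut: "is_aut C g"
begin

private lemma fst_inv: "fst g (inv (fst g) x) = x"
  by (rule surj_f_inv_f[OF bij_is_surj[OF aut_bij_obj[OF aut]]])

private lemma aut_bij_mor_inv:
  "bij_betw (snd g (inv (fst g) x) (inv (fst g) y)) (Hom C (inv (fst g) x) (inv (fst g) y)) (Hom C x y)"
  using aut_bij_mor[OF aut, of "inv (fst g) x" "inv (fst g) y"] by (simp only: fst_inv)

lemma aut_inv_mor_bij:
  "bij_betw (aut_inv_mor C g x y) (Hom C x y) (Hom C (inv (fst g) x) (inv (fst g) y))"
  unfolding aut_inv_mor_def by (rule bij_betw_inv_into[OF aut_bij_mor_inv])

lemma aut_inv_mor_in: "a \<in> Hom C x y \<Longrightarrow> aut_inv_mor C g x y a \<in> Hom C (inv (fst g) x) (inv (fst g) y)"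
  by (rule bij_betw_apply[OF aut_inv_mor_bij])

lemma aut_aut_inv_mor:
  "a \<in> Hom C x y \<Longrightarrow> snd g (inv (fst g) x) (inv (fst g) y) (aut_inv_mor C g x y a) = a"
  unfolding aut_inv_mor_def by (rule bij_betw_inv_into_right[OF aut_bij_mor_inv])

private lemma aut_mor_inv_cancel:
  assumes "u \<in> Hom C (inv (fst g) x) (inv (fst g) y)" "v \<in> Hom C (inv (fst g) x) (inv (fst g) y)"
    and "snd g (inv (fst g) x) (inv (fst g) y) u = snd g (inv (fst g) x) (inv (fst g) y) v"
  shows "u = v"
  using inj_onD[OF bij_betw_imp_inj_on[OF aut_bij_mor_inv] assms(3,1,2)] .

lemma aut_inv_mor_linear:
  assumes "is_kcat C"
  shows "linear_on (sc C) (sc C) (Hom C x y) (Hom C (inv (fst g) x) (inv (fst g) y)) (aut_inv_mor C g x y)"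
proof -
  have "linear_on (sc C) (sc C) (Hom C (inv (fst g) x) (inv (fst g) y)) (Hom C x y)
          (snd g (inv (fst g) x) (inv (fst g) y))"
    using aut_linear_mor[OF aut, of "inv (fst g) x" "inv (fst g) y"] by (simp only: fst_inv)
  then show ?thesis
    unfolding aut_inv_mor_def
    by (rule linear_on_inv_into[OF _ aut_bij_mor_inv Hom_add[OF assms] Hom_scale[OF assms]])
qed

lemma aut_inv_mor_cmp:
  assumes kc: "is_kcat C" and a: "a \<in> Hom C x y" and b: "b \<in> Hom C y z"
  shows "aut_inv_mor C g x z (cmp C x y z b a)
    = cmp C (inv (fst g) x) (inv (fst g) y) (inv (fst g) z) (aut_inv_mor C g y z b) (aut_inv_mor C g x y a)"
proof (rule aut_mor_inv_cancel)
  show "snd g (inv (fst g) x) (inv (fst g) z) (aut_inv_mor C g x z (cmp C x y z b a))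
    = snd g (inv (fst g) x) (inv (fst g) z)
        (cmp C (inv (fst g) x) (inv (fst g) y) (inv (fst g) z) (aut_inv_mor C g y z b) (aut_inv_mor C g x y a))"
    unfolding aut_cmp[OF aut aut_inv_mor_in[OF a] aut_inv_mor_in[OF b]] fst_inv
    using a b Hom_cmp[OF kc a b] by (simp add: aut_aut_inv_mor)
qed (use a b kc in \<open>simp_all add: aut_inv_mor_in Hom_cmp\<close>)

lemma aut_inv_mor_idm:
  assumes kc: "is_kcat C"
  shows "aut_inv_mor C g x x (idm C x) = idm C (inv (fst g) x)"
proof (rule aut_mor_inv_cancel)
  show "snd g (inv (fst g) x) (inv (fst g) x) (aut_inv_mor C g x x (idm C x))
    = snd g (inv (fst g) x) (inv (fst g) x) (idm C (inv (fst g) x))"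
    unfolding aut_idm[OF aut] fst_inv using Hom_idm[OF kc] by (simp add: aut_aut_inv_mor)
qed (use kc in \<open>simp_all add: aut_inv_mor_in Hom_idm\<close>)

lemma aut_inv_mor_nonzero:
  assumes kc: "is_kcat C" and a: "a \<in> Hom C x y" "a \<noteq> 0"
  shows "aut_inv_mor C g x y a \<noteq> 0"
proof
  have "aut_inv_mor C g x y 0 = 0" by (rule linear_on_zero[OF aut_inv_mor_linear[OF kc] Hom_zero[OF kc]])
  moreover assume "aut_inv_mor C g x y a = 0"
  ultimately have "a = 0"
    using inj_onD[OF bij_betw_imp_inj_on[OF aut_inv_mor_bij] _ a(1) Hom_zero[OF kc]] by simp
  with a(2) show False ..
qed

end

lemma is_module_twist:
  assumes kc: "is_kcat C" and aut: "is_aut C g" and M: "is_module C sw M"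
  shows "is_module C sw (twist C g M)"
  unfolding is_module_def Mob_twist Mmap_twist
proof (intro conjI allI ballI)
  fix x show "module.subspace sw (Mob M (inv (fst g) x))" using M unfolding is_module_def by simp
next
  fix x y a assume "a \<in> Hom C x y"
  then show "linear_on sw sw (Mob M (inv (fst g) y)) (Mob M (inv (fst g) x))
      (Mmap M (inv (fst g) x) (inv (fst g) y) (aut_inv_mor C g x y a))"
    by (intro module_map_linear[OF M] aut_inv_mor_in[OF aut])
next
  fix x y v assume "v \<in> Mob M (inv (fst g) y)"
  then show "linear_on (sc C) sw (Hom C x y) (Mob M (inv (fst g) x))
      (\<lambda>a. Mmap M (inv (fst g) x) (inv (fst g) y) (aut_inv_mor C g x y a) v)"
    using linear_on_comp[OF aut_inv_mor_linear[OF aut kc] module_map_linear_mor[OF M]]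
    by (simp add: comp_def)
next
  fix x v assume "v \<in> Mob M (inv (fst g) x)"
  then show "Mmap M (inv (fst g) x) (inv (fst g) x) (aut_inv_mor C g x x (idm C x)) v = v"
    by (simp add: aut_inv_mor_idm[OF aut kc] module_map_idm[OF M])
next
  fix x y z a b v assume "a \<in> Hom C x y" "b \<in> Hom C y z" "v \<in> Mob M (inv (fst g) z)"
  then show "Mmap M (inv (fst g) x) (inv (fst g) z) (aut_inv_mor C g x z (cmp C x y z b a)) v
    = Mmap M (inv (fst g) x) (inv (fst g) y) (aut_inv_mor C g x y a)
        (Mmap M (inv (fst g) y) (inv (fst g) z) (aut_inv_mor C g y z b) v)"
    by (simp add: aut_inv_mor_cmp[OF aut kc] module_map_cmp[OF M] aut_inv_mor_in[OF aut])
qed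

lemma is_BL_twist:
  assumes kc: "is_kcat C" and aut: "is_aut C g" and BL: "is_BL C sw L M" and gL: "fst g ` L = L"
  shows "is_BL C sw L (twist C g M)"
proof -
  have L: "inv (fst g) x \<in> L \<longleftrightarrow> x \<in> L" for x
    using gL bij_image_eq_iff_inv_mem[OF aut_bij_obj[OF aut]] by simp
  have M: "is_module C sw M" using BL unfolding is_BL_def by simp
  show ?thesis
    unfolding is_BL_def
  proof (intro conjI ballI allI impI)
    show "is_module C sw (twist C g M)" by (rule is_module_twist[OF kc aut M])
  next
    fix x assume "x \<in> L"
    then show "\<exists>v. v \<noteq> 0 \<and> Mob (twist C g M) x = module.span sw {v}"
      using BL L unfolding is_BL_def Mob_twist by simp
  next
    fix x assume "x \<notin> L"
    then show "Mob (twist C g M) x = {0}"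
      using BL L unfolding is_BL_def Mob_twist by simp
  next
    fix x y a assume "x \<in> L" "y \<in> L" "a \<in> Hom C x y" "a \<noteq> 0"
    then show "\<exists>v\<in>Mob (twist C g M) y. Mmap (twist C g M) x y a v \<noteq> 0"
      using BL L aut_inv_mor_in[OF aut] aut_inv_mor_nonzero[OF aut kc]
      unfolding is_BL_def Mob_twist Mmap_twist by simp
  qed
qed

lemma mod_iso_Mob_zero_iff:
  assumes sw: "module sw" and M: "is_module C sw M" and N: "is_module C sw N"
    and iso: "mod_iso C sw M N"
  shows "Mob M x = {0} \<longleftrightarrow> Mob N x = {0}"
proof -
  obtain f where "bij_betw (f x) (Mob M x) (Mob N x)"
    using iso unfolding mod_iso_def by blast
  then show ?thesis by (rule bij_betw_zero_singleton_iff[OF _ Mob_zero[OF sw M] Mob_zero[OF sw N]])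
qed

lemma is_BL_Mob_zero_iff:
  assumes sw: "module sw" and BL: "is_BL C sw L M"
  shows "Mob M x = {0} \<longleftrightarrow> x \<notin> L"
proof
  assume "Mob M x = {0}"
  show "x \<notin> L"
  proof
    assume "x \<in> L"
    then obtain v where "v \<noteq> 0" "Mob M x = module.span sw {v}"
      using BL unfolding is_BL_def by blast
    then show False using module.span_base[OF sw, of v "{v}"] \<open>Mob M x = {0}\<close> by auto
  qed
qed (use BL in \<open>simp add: is_BL_def\<close>)

section \<open>Modules of the form \<open>B\<^sub>L\<close>\<close>

lemma module_fscale: "module (fscale :: 'k::field \<Rightarrow> (nat \<Rightarrow> 'k) \<Rightarrow> _)"
  by unfold_locales (auto simp: fscale_def fun_eq_iff algebra_simps)

lemma fscale_fscale [simp]: "fscale c (fscale d v) = fscale (c * d) v"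
  by (simp add: fscale_def fun_eq_iff)

lemma fscale_zero [simp]: "fscale c 0 = 0" "fscale 0 v = 0"
  by (simp_all add: fscale_def fun_eq_iff)

lemma fscale_one [simp]: "fscale 1 v = v"
  by (simp add: fscale_def fun_eq_iff)

lemma fscale_add_left: "fscale (a + b) v = fscale a v + fscale b v"
  by (simp add: fscale_def fun_eq_iff algebra_simps)

text \<open>The coefficient of \<open>w\<close> on the line spanned by \<open>v \<noteq> 0\<close>, read off at a place where
  \<open>v\<close> does not vanish; it is meaningful only for \<open>w\<close> on that line.\<close>
definition coord :: "(nat \<Rightarrow> 'k::field) \<Rightarrow> (nat \<Rightarrow> 'k) \<Rightarrow> 'k" where
  "coord v w = w (SOME n. v n \<noteq> 0) / v (SOME n. v n \<noteq> 0)"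

lemma coord_fscale_self [simp]:
  assumes "v \<noteq> 0"
  shows "coord v (fscale c v) = c"
proof -
  have "\<exists>n. v n \<noteq> 0" using assms by (auto simp: fun_eq_iff)
  then have "v (SOME n. v n \<noteq> 0) \<noteq> 0" by (rule someI_ex)
  then show ?thesis by (simp add: coord_def fscale_def)
qed

lemma coord_self [simp]: "v \<noteq> 0 \<Longrightarrow> coord v v = 1"
  using coord_fscale_self[of v 1] by simp

lemma coord_add: "coord v (u + w) = coord v u + coord v w"
  by (simp add: coord_def add_divide_distrib)

lemma coord_fscale: "coord v (fscale c u) = c * coord v u"
  by (simp add: coord_def fscale_def)

lemma coord_zero [simp]: "coord v 0 = 0"
  by (simp add: coord_def)

lemma fscale_line_iso:
  fixes m n :: "nat \<Rightarrow> 'k::field"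
  assumes "m \<noteq> 0" "n \<noteq> 0" "l \<noteq> 0"
  shows "linear_on fscale fscale (range (\<lambda>c. fscale c m)) (range (\<lambda>c. fscale c n))
           (\<lambda>w. fscale (l * coord m w) n)"
    and "bij_betw (\<lambda>w. fscale (l * coord m w) n) (range (\<lambda>c. fscale c m)) (range (\<lambda>c. fscale c n))"
proof -
  show "linear_on fscale fscale (range (\<lambda>c. fscale c m)) (range (\<lambda>c. fscale c n))
      (\<lambda>w. fscale (l * coord m w) n)"
    unfolding linear_on_def by (auto simp: coord_add coord_fscale fscale_add_left algebra_simps)
  show "bij_betw (\<lambda>w. fscale (l * coord m w) n) (range (\<lambda>c. fscale c m)) (range (\<lambda>c. fscale c n))"
    by (rule bij_betw_byWitness[where f' = "\<lambda>w. fscale (coord n w / l) m"]) (use assms in auto)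
qed

definition BL_gen :: "('o, 'm, nat \<Rightarrow> 'k::field) kmod \<Rightarrow> 'o \<Rightarrow> nat \<Rightarrow> 'k" where
  "BL_gen M x = (SOME v. v \<noteq> 0 \<and> Mob M x = module.span fscale {v})"

lemma
  assumes "is_BL C fscale L M" "x \<in> L"
  shows BL_gen_nonzero: "BL_gen M x \<noteq> 0"
    and Mob_BL_eq: "Mob M x = range (\<lambda>c. fscale c (BL_gen M x))"
proof -
  have "\<exists>v. v \<noteq> 0 \<and> Mob M x = module.span fscale {v}" using assms unfolding is_BL_def by simp
  then have "BL_gen M x \<noteq> 0 \<and> Mob M x = module.span fscale {BL_gen M x}"
    unfolding BL_gen_def by (rule someI_ex)
  then show "BL_gen M x \<noteq> 0" "Mob M x = range (\<lambda>c. fscale c (BL_gen M x))"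
    by (simp_all add: module.span_singleton[OF module_fscale])
qed

lemma BL_coord_eq:
  assumes "is_BL C fscale L M" "x \<in> L" "w \<in> Mob M x"
  shows "fscale (coord (BL_gen M x) w) (BL_gen M x) = w"
  using assms BL_gen_nonzero[OF assms(1,2)] by (auto simp: Mob_BL_eq[OF assms(1,2)])

lemma BL_gen_in:
  assumes "is_BL C fscale L M" "x \<in> L"
  shows "BL_gen M x \<in> Mob M x"
proof -
  have "fscale 1 (BL_gen M x) \<in> Mob M x" unfolding Mob_BL_eq[OF assms] by (rule rangeI)
  then show ?thesis by simp
qed

definition act_scalar :: "('k::field, 'o, 'm::ab_group_add) kcat \<Rightarrow> ('o, 'm, nat \<Rightarrow> 'k) kmod \<Rightarrow> 'o \<Rightarrow> 'o \<Rightarrow> 'm \<Rightarrow> 'k" where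
  "act_scalar C M x y a = coord (BL_gen M x) (Mmap M x y a (BL_gen M y))"

context
  fixes C :: "('k::field, 'o, 'm::ab_group_add) kcat" and L :: "'o set"
    and M :: "('o, 'm, nat \<Rightarrow> 'k) kmod"
  assumes BL: "is_BL C fscale L M"
begin

private lemma M_module: "is_module C fscale M"
  using BL unfolding is_BL_def by simp

lemma Mmap_BL_eq:
  assumes "x \<in> L" "y \<in> L" "a \<in> Hom C x y" "v \<in> Mob M y"
  shows "Mmap M x y a v = fscale (coord (BL_gen M y) v * act_scalar C M x y a) (BL_gen M x)"
proof -
  have "Mmap M x y a (BL_gen M y) \<in> Mob M x"
    by (rule linear_on_into[OF module_map_linear[OF M_module assms(3)] BL_gen_in[OF BL assms(2)]])
  then have gen: "Mmap M x y a (BL_gen M y) = fscale (act_scalar C M x y a) (BL_gen M x)"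
    unfolding act_scalar_def by (rule BL_coord_eq[OF BL assms(1), symmetric])
  have "Mmap M x y a v = fscale (coord (BL_gen M y) v) (Mmap M x y a (BL_gen M y))"
    using linear_on_scale[OF module_map_linear[OF M_module assms(3)] BL_gen_in[OF BL assms(2)]]
      BL_coord_eq[OF BL assms(2,4)] by metis
  then show ?thesis unfolding gen by simp
qed

lemma act_scalar_cmp:
  assumes "x \<in> L" "y \<in> L" "z \<in> L" "a \<in> Hom C x y" "b \<in> Hom C y z"
  shows "act_scalar C M x z (cmp C x y z b a) = act_scalar C M y z b * act_scalar C M x y a"
proof -
  have "Mmap M x z (cmp C x y z b a) (BL_gen M z) = Mmap M x y a (Mmap M y z b (BL_gen M z))"
    by (rule module_map_cmp[OF M_module assms(4,5) BL_gen_in[OF BL assms(3)]])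
  also have "\<dots> = Mmap M x y a (fscale (act_scalar C M y z b) (BL_gen M y))"
    using Mmap_BL_eq[OF assms(2,3,5) BL_gen_in[OF BL assms(3)]] BL_gen_nonzero[OF BL assms(3)] by simp
  also have "\<dots> = fscale (act_scalar C M y z b * act_scalar C M x y a) (BL_gen M x)"
    using Mmap_BL_eq[OF assms(1,2,4)] BL_gen_in[OF BL assms(2)] BL_gen_nonzero[OF BL assms(2)]
      Mob_BL_eq[OF BL assms(2)] by (simp add: coord_fscale)
  finally show ?thesis unfolding act_scalar_def using BL_gen_nonzero[OF BL assms(1)] by simp
qed

lemma act_scalar_nonzero:
  assumes "x \<in> L" "y \<in> L" "a \<in> Hom C x y" "a \<noteq> 0"
  shows "act_scalar C M x y a \<noteq> 0"
proof
  assume "act_scalar C M x y a = 0"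
  moreover obtain v where "v \<in> Mob M y" "Mmap M x y a v \<noteq> 0"
    using BL assms unfolding is_BL_def by blast
  ultimately show False using Mmap_BL_eq[OF assms(1-3)] by simp
qed

lemma act_scalar_scale:
  assumes "y \<in> L" "a \<in> Hom C x y"
  shows "act_scalar C M x y (sc C c a) = c * act_scalar C M x y a"
  unfolding act_scalar_def
  using linear_on_scale[OF module_map_linear_mor[OF M_module BL_gen_in[OF BL assms(1)]] assms(2)]
  by (simp add: coord_fscale)

lemma act_scalar_zero:
  assumes "y \<in> L" "0 \<in> Hom C x y"
  shows "act_scalar C M x y 0 = 0"
  unfolding act_scalar_def
  using linear_on_zero[OF module_map_linear_mor[OF M_module BL_gen_in[OF BL assms(1)]] assms(2)]
  by simp

end

lemma mod_iso_BL_rescale: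
  fixes M N :: "('o, 'm::ab_group_add, nat \<Rightarrow> 'k::field) kmod"
  assumes BM: "is_BL C fscale L M" and BN: "is_BL C fscale L N"
    and \<mu>_nonzero: "\<And>x. x \<in> L \<Longrightarrow> \<mu> x \<noteq> 0"
    and \<mu>_compat: "\<And>x y a. x \<in> L \<Longrightarrow> y \<in> L \<Longrightarrow> a \<in> Hom C x y \<Longrightarrow>
      \<mu> x * act_scalar C M x y a = \<mu> y * act_scalar C N x y a"
  shows "mod_iso C fscale M N"
proof -
  define f where "f x w = fscale (\<mu> x * coord (BL_gen M x) w) (BL_gen N x)" for x w
  have M: "is_module C fscale M" and N: "is_module C fscale N"
    using BM BN unfolding is_BL_def by simp_all
  have M0: "Mob M x = {0}" and N0: "Mob N x = {0}" if "x \<notin> L" for x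
    using BM BN that unfolding is_BL_def by simp_all
  have iso_x: "linear_on fscale fscale (Mob M x) (Mob N x) (f x) \<and> bij_betw (f x) (Mob M x) (Mob N x)" for x
  proof (cases "x \<in> L")
    case True
    show ?thesis
      unfolding f_def Mob_BL_eq[OF BM True] Mob_BL_eq[OF BN True]
      using fscale_line_iso[OF BL_gen_nonzero[OF BM True] BL_gen_nonzero[OF BN True] \<mu>_nonzero[OF True]]
      by simp
  qed (simp add: M0 N0 f_def linear_on_def)
  have f_in: "f y v \<in> Mob N y" if "v \<in> Mob M y" for y v
    using linear_on_into[OF conjunct1[OF iso_x] that] .
  have natural: "f x (Mmap M x y a v) = Mmap N x y a (f y v)" if a: "a \<in> Hom C x y" and v: "v \<in> Mob M y" for x y a v
  proof (cases "x \<in> L \<and> y \<in> L")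
    case True
    define c where "c = coord (BL_gen M y) v"
    have "\<mu> x * (c * act_scalar C M x y a) = \<mu> y * (c * act_scalar C N x y a)"
      using \<mu>_compat[OF _ _ a] True by (metis mult.left_commute)
    moreover have "f x (Mmap M x y a v) = fscale (\<mu> x * (c * act_scalar C M x y a)) (BL_gen N x)"
      using True Mmap_BL_eq[OF BM _ _ a v] BL_gen_nonzero[OF BM] by (simp add: f_def c_def)
    moreover have "Mmap N x y a (f y v) = fscale (\<mu> y * (c * act_scalar C N x y a)) (BL_gen N x)"
      using True Mmap_BL_eq[OF BN _ _ a f_in[OF v]] BL_gen_nonzero[OF BN]
      by (simp add: f_def c_def coord_fscale mult.assoc)
    ultimately show ?thesis by (simp only:)
  next
    case False
    then consider "y \<notin> L" | "x \<notin> L" by blast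
    then show ?thesis
    proof cases
      case 1
      then have "v = 0" using v M0 by simp
      then show ?thesis
        using linear_on_zero[OF module_map_linear[OF M a] Mob_zero[OF module_fscale M]]
          linear_on_zero[OF module_map_linear[OF N a] Mob_zero[OF module_fscale N]]
        by (simp add: f_def)
    next
      case 2
      then show ?thesis
        using linear_on_into[OF module_map_linear[OF M a] v]
          linear_on_into[OF module_map_linear[OF N a] f_in[OF v]] M0 N0
        by (simp add: f_def)
    qed
  qed
  show ?thesis
    unfolding mod_iso_def using iso_x natural by blast
qed

section \<open>Lines\<close>

lemma int_multiplicative_primitive:
  fixes \<rho> :: "int \<Rightarrow> 'k::field"
  assumes \<rho>: "\<And>t. \<rho> t \<noteq> 0"
  obtains \<theta> where "\<And>t. \<theta> t \<noteq> 0" "\<And>t. \<theta> (t + 1) = \<theta> t * \<rho> t"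
proof
  define P where "P m = (\<Prod>n<m. \<rho> (- int n - 1))" for m
  define \<theta> where "\<theta> i = (if 0 \<le> i then \<Prod>n<nat i. \<rho> (int n) else inverse (P (nat (- i))))" for i
  have P_nonzero: "P m \<noteq> 0" for m unfolding P_def using \<rho> by simp
  have \<theta>_neg: "\<theta> (- int m) = inverse (P m)" for m
    by (cases "m = 0") (simp_all add: \<theta>_def P_def)
  show "\<theta> t \<noteq> 0" for t unfolding \<theta>_def using \<rho> P_nonzero by simp
  show "\<theta> (t + 1) = \<theta> t * \<rho> t" for t
  proof (cases "0 \<le> t")
    case True
    then have "nat (t + 1) = Suc (nat t)" by simp
    then show ?thesis using True by (simp add: \<theta>_def)
  next
    case False
    define m where "m = nat (- t - 1)"
    have t: "t = - int m - 1" using False by (simp add: m_def)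
    have "nat (- t) = Suc m" using t by simp
    then have "\<theta> t = inverse (P m * \<rho> t)"
      using False t by (simp add: \<theta>_def P_def)
    moreover have "\<theta> (t + 1) = inverse (P m)" using \<theta>_neg[of m] t by simp
    ultimately show ?thesis using \<rho>[of t] by (simp add: field_simps)
  qed
qed

lemma lq_path_refl: "lq_path ori i i"
  unfolding lq_path_def by auto

lemma lq_path_step: "ori t \<Longrightarrow> lq_path ori t (t + 1)" "\<not> ori t \<Longrightarrow> lq_path ori (t + 1) t"
  unfolding lq_path_def by auto

text \<open>Paths in a linear quiver never change direction, so a multiplicative family of scalars
  attached to them is determined by its values on the arrows; those can be integrated along \<open>\<int>\<close>.\<close>
lemma lq_path_cocycle_coboundary:
  fixes \<gamma> :: "int \<Rightarrow> int \<Rightarrow> 'k::field"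
  assumes interval: "\<And>i j t. i \<in> I \<Longrightarrow> j \<in> I \<Longrightarrow> i \<le> t \<Longrightarrow> t \<le> j \<Longrightarrow> t \<in> I"
    and nonzero: "\<And>i j. i \<in> I \<Longrightarrow> j \<in> I \<Longrightarrow> lq_path ori i j \<Longrightarrow> \<gamma> i j \<noteq> 0"
    and mult: "\<And>i j l. i \<in> I \<Longrightarrow> j \<in> I \<Longrightarrow> l \<in> I \<Longrightarrow> lq_path ori i j \<Longrightarrow> lq_path ori j l \<Longrightarrow>
      \<gamma> i l = \<gamma> j l * \<gamma> i j"
  obtains \<theta> where "\<And>i. \<theta> i \<noteq> 0" "\<And>i j. i \<in> I \<Longrightarrow> j \<in> I \<Longrightarrow> lq_path ori i j \<Longrightarrow> \<theta> j = \<theta> i * \<gamma> i j"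
proof -
  define \<rho> where "\<rho> t = (if t \<in> I \<and> t + 1 \<in> I
    then (if ori t then \<gamma> t (t + 1) else inverse (\<gamma> (t + 1) t)) else 1)" for t
  have \<rho>_nonzero: "\<rho> t \<noteq> 0" for t unfolding \<rho>_def using nonzero lq_path_step by simp
  obtain \<theta> where \<theta>_nonzero: "\<And>t. \<theta> t \<noteq> 0" and \<theta>_step: "\<And>t. \<theta> (t + 1) = \<theta> t * \<rho> t"
    using int_multiplicative_primitive[of \<rho>] \<rho>_nonzero by blast
  have \<gamma>_refl: "\<gamma> i i = 1" if "i \<in> I" for i
    using mult[OF that that that lq_path_refl lq_path_refl] nonzero[OF that that lq_path_refl] by simp
  have up: "j \<in> I \<longrightarrow> (\<forall>t. i \<le> t \<and> t < j \<longrightarrow> ori t) \<longrightarrow> \<theta> j = \<theta> i * \<gamma> i j"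
    if i: "i \<in> I" and "i \<le> j" for i j
    using \<open>i \<le> j\<close>
  proof (induction j rule: int_ge_induct)
    case base
    show ?case using \<gamma>_refl[OF i] by simp
  next
    case (step j)
    show ?case
    proof (intro impI)
      assume j1: "j + 1 \<in> I" and ori: "\<forall>t. i \<le> t \<and> t < j + 1 \<longrightarrow> ori t"
      have j: "j \<in> I" using interval[OF i j1] step.hyps by simp
      have "lq_path ori i j" using ori step.hyps unfolding lq_path_def by simp
      moreover have "ori j" using ori step.hyps by simp
      ultimately show "\<theta> (j + 1) = \<theta> i * \<gamma> i (j + 1)"
        using step.IH ori j j1 mult[OF i j j1] lq_path_step(1) by (simp add: \<theta>_step \<rho>_def)
    qed
  qed
  have down: "j \<in> I \<longrightarrow> (\<forall>t. i \<le> t \<and> t < j \<longrightarrow> \<not> ori t) \<longrightarrow> \<theta> i = \<theta> j * \<gamma> j i"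
    if i: "i \<in> I" and "i \<le> j" for i j
    using \<open>i \<le> j\<close>
  proof (induction j rule: int_ge_induct)
    case base
    show ?case using \<gamma>_refl[OF i] by simp
  next
    case (step j)
    show ?case
    proof (intro impI)
      assume j1: "j + 1 \<in> I" and ori: "\<forall>t. i \<le> t \<and> t < j + 1 \<longrightarrow> \<not> ori t"
      have j: "j \<in> I" using interval[OF i j1] step.hyps by simp
      have "lq_path ori j i" using ori step.hyps unfolding lq_path_def by simp
      moreover have "\<not> ori j" using ori step.hyps by simp
      moreover have "\<gamma> (j + 1) j \<noteq> 0" using nonzero[OF j1 j] lq_path_step(2) \<open>\<not> ori j\<close> by simp
      ultimately show "\<theta> i = \<theta> (j + 1) * \<gamma> (j + 1) i"
        using step.IH ori j j1 mult[OF j1 j i] lq_path_step(2) by (simp add: \<theta>_step \<rho>_def)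
    qed
  qed
  show ?thesis
  proof (rule that[OF \<theta>_nonzero])
    fix i j assume i: "i \<in> I" and j: "j \<in> I" and "lq_path ori i j"
    then consider "i \<le> j" "\<forall>t. i \<le> t \<and> t < j \<longrightarrow> ori t" | "j \<le> i" "\<forall>t. j \<le> t \<and> t < i \<longrightarrow> \<not> ori t"
      unfolding lq_path_def by blast
    then show "\<theta> j = \<theta> i * \<gamma> i j"
    proof cases
      case 1
      then show ?thesis using up[OF i] j by blast
    next
      case 2
      then show ?thesis using down[OF j] i by blast
    qed
  qed
qed

lemma linear_index_interval:
  "linear_index I \<Longrightarrow> i \<in> I \<Longrightarrow> j \<in> I \<Longrightarrow> i \<le> t \<Longrightarrow> t \<le> j \<Longrightarrow> t \<in> I"
  unfolding linear_index_def by auto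

text \<open>\<open>e i j\<close> is the image of the path from \<open>i\<close> to \<open>j\<close> under \<open>kQ \<cong> L\<close>.\<close>
lemma line_basis:
  fixes C :: "('k::field, 'o, 'm::ab_group_add) kcat" and L :: "'o set"
  assumes "is_line C L"
  obtains I phi ori e where
    "\<And>i j t. i \<in> I \<Longrightarrow> j \<in> I \<Longrightarrow> i \<le> t \<Longrightarrow> t \<le> j \<Longrightarrow> t \<in> I"
    "bij_betw phi I L"
    "\<And>i j. i \<in> I \<Longrightarrow> j \<in> I \<Longrightarrow> lq_path ori i j \<Longrightarrow> e i j \<in> Hom C (phi i) (phi j) \<and> e i j \<noteq> 0"
    "\<And>i j a. i \<in> I \<Longrightarrow> j \<in> I \<Longrightarrow> lq_path ori i j \<Longrightarrow> a \<in> Hom C (phi i) (phi j) \<Longrightarrow>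
       \<exists>c. a = sc C c (e i j)"
    "\<And>i j. i \<in> I \<Longrightarrow> j \<in> I \<Longrightarrow> \<not> lq_path ori i j \<Longrightarrow> Hom C (phi i) (phi j) = {0}"
    "\<And>i j l. i \<in> I \<Longrightarrow> j \<in> I \<Longrightarrow> l \<in> I \<Longrightarrow> lq_path ori i j \<Longrightarrow> lq_path ori j l \<Longrightarrow>
       e i l = cmp C (phi i) (phi j) (phi l) (e j l) (e i j)"
proof -
  obtain I ori and phi :: "int \<Rightarrow> 'o" and F :: "int \<Rightarrow> int \<Rightarrow> 'k \<Rightarrow> 'm" where
    I: "linear_index I" and phi: "bij_betw phi I L"
    and F_iso: "\<forall>i\<in>I. \<forall>j\<in>I. linear_on (*) (sc C) (kQhom ori i j) (Hom C (phi i) (phi j)) (F i j) \<and>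
      bij_betw (F i j) (kQhom ori i j) (Hom C (phi i) (phi j))"
    and F_cmp: "\<forall>i\<in>I. \<forall>j\<in>I. \<forall>l\<in>I. \<forall>c\<in>kQhom ori i j. \<forall>d\<in>kQhom ori j l.
      F i l (d * c) = cmp C (phi i) (phi j) (phi l) (F j l d) (F i j c)"
    using assms unfolding is_line_def by (elim conjE exE)
  have F_linear: "linear_on (*) (sc C) (kQhom ori i j) (Hom C (phi i) (phi j)) (F i j)"
    and F_bij: "bij_betw (F i j) (kQhom ori i j) (Hom C (phi i) (phi j))" if "i \<in> I" "j \<in> I" for i j
    using F_iso that by simp_all
  have F_zero: "F i j 0 = 0" if "i \<in> I" "j \<in> I" for i j
    by (rule linear_on_zero[OF F_linear[OF that]]) (simp add: kQhom_def)
  show ?thesis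
  proof (rule that[of I phi ori "\<lambda>i j. F i j 1"])
    show "t \<in> I" if "i \<in> I" "j \<in> I" "i \<le> t" "t \<le> j" for i j t
      by (rule linear_index_interval[OF I that])
    show "bij_betw phi I L" by (fact phi)
  next
    fix i j assume ij: "i \<in> I" "j \<in> I" and path: "lq_path ori i j"
    then have kQ: "kQhom ori i j = (UNIV :: 'k set)" by (simp add: kQhom_def)
    have "F i j 1 \<noteq> F i j 0"
    proof
      assume "F i j 1 = F i j 0"
      then have "(1::'k) = 0"
        by (rule inj_onD[OF bij_betw_imp_inj_on[OF F_bij[OF ij]]]) (simp_all add: kQ)
      then show False by simp
    qed
    then show "F i j 1 \<in> Hom C (phi i) (phi j) \<and> F i j 1 \<noteq> 0"
      using bij_betw_apply[OF F_bij[OF ij]] F_zero[OF ij] unfolding kQ by simp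
  next
    fix i j a assume ij: "i \<in> I" "j \<in> I" and "lq_path ori i j" and a: "a \<in> Hom C (phi i) (phi j)"
    then have kQ: "kQhom ori i j = (UNIV :: 'k set)" by (simp add: kQhom_def)
    obtain c where "a = F i j c"
      using a bij_betw_imp_surj_on[OF F_bij[OF ij]] unfolding kQ by auto
    also have "F i j c = sc C c (F i j 1)"
      using linear_on_scale[OF F_linear[OF ij], of 1 c] unfolding kQ by simp
    finally show "\<exists>c. a = sc C c (F i j 1)" ..
  next
    fix i j assume ij: "i \<in> I" "j \<in> I" and "\<not> lq_path ori i j"
    then have "kQhom ori i j = {0 :: 'k}" by (simp add: kQhom_def)
    then show "Hom C (phi i) (phi j) = {0}"
      using bij_betw_imp_surj_on[OF F_bij[OF ij]] F_zero[OF ij] by simp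
  next
    fix i j l assume ijl: "i \<in> I" "j \<in> I" "l \<in> I" and "lq_path ori i j" "lq_path ori j l"
    then have "(1::'k) \<in> kQhom ori i j" "(1::'k) \<in> kQhom ori j l" by (simp_all add: kQhom_def)
    then have "F i l (1 * 1) = cmp C (phi i) (phi j) (phi l) (F j l 1) (F i j 1)"
      by (rule F_cmp[rule_format, OF ijl])
    then show "F i l 1 = cmp C (phi i) (phi j) (phi l) (F j l 1) (F i j 1)" by simp
  qed
qed

lemma BL_unique:
  fixes M N :: "('o, 'm::ab_group_add, nat \<Rightarrow> 'k::field) kmod"
  assumes line: "is_line C L" and BM: "is_BL C fscale L M" and BN: "is_BL C fscale L N"
  shows "mod_iso C fscale M N"
proof -
  obtain I phi ori e where
    interval: "\<And>i j t. i \<in> I \<Longrightarrow> j \<in> I \<Longrightarrow> i \<le> t \<Longrightarrow> t \<le> j \<Longrightarrow> t \<in> I"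
    and phi: "bij_betw phi I L"
    and e: "\<And>i j. i \<in> I \<Longrightarrow> j \<in> I \<Longrightarrow> lq_path ori i j \<Longrightarrow> e i j \<in> Hom C (phi i) (phi j) \<and> e i j \<noteq> 0"
    and span: "\<And>i j a. i \<in> I \<Longrightarrow> j \<in> I \<Longrightarrow> lq_path ori i j \<Longrightarrow> a \<in> Hom C (phi i) (phi j) \<Longrightarrow>
      \<exists>c. a = sc C c (e i j)"
    and no_path: "\<And>i j. i \<in> I \<Longrightarrow> j \<in> I \<Longrightarrow> \<not> lq_path ori i j \<Longrightarrow> Hom C (phi i) (phi j) = {0}"
    and e_cmp: "\<And>i j l. i \<in> I \<Longrightarrow> j \<in> I \<Longrightarrow> l \<in> I \<Longrightarrow> lq_path ori i j \<Longrightarrow> lq_path ori j l \<Longrightarrow>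
      e i l = cmp C (phi i) (phi j) (phi l) (e j l) (e i j)"
    by (rule line_basis[OF line]) (rule that)
  have phi_L: "phi i \<in> L" if "i \<in> I" for i using bij_betw_apply[OF phi that] .
  define \<alpha> where "\<alpha> i j = act_scalar C M (phi i) (phi j) (e i j)" for i j
  define \<beta> where "\<beta> i j = act_scalar C N (phi i) (phi j) (e i j)" for i j
  have \<alpha>\<beta>_nonzero: "\<alpha> i j \<noteq> 0 \<and> \<beta> i j \<noteq> 0" if "i \<in> I" "j \<in> I" "lq_path ori i j" for i j
    unfolding \<alpha>_def \<beta>_def using e[OF that] phi_L that
    by (simp add: act_scalar_nonzero[OF BM] act_scalar_nonzero[OF BN])
  have \<alpha>\<beta>_cmp: "\<alpha> i l = \<alpha> j l * \<alpha> i j \<and> \<beta> i l = \<beta> j l * \<beta> i j"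
    if "i \<in> I" "j \<in> I" "l \<in> I" "lq_path ori i j" "lq_path ori j l" for i j l
    unfolding \<alpha>_def \<beta>_def e_cmp[OF that] using that e phi_L
    by (simp add: act_scalar_cmp[OF BM] act_scalar_cmp[OF BN])
  define \<gamma> where "\<gamma> i j = \<alpha> i j / \<beta> i j" for i j
  have \<gamma>_nonzero: "\<gamma> i j \<noteq> 0" if "i \<in> I" "j \<in> I" "lq_path ori i j" for i j
    unfolding \<gamma>_def using \<alpha>\<beta>_nonzero[OF that] by simp
  have \<gamma>_mult: "\<gamma> i l = \<gamma> j l * \<gamma> i j"
    if "i \<in> I" "j \<in> I" "l \<in> I" "lq_path ori i j" "lq_path ori j l" for i j l
    unfolding \<gamma>_def using \<alpha>\<beta>_cmp[OF that] by simp
  obtain \<theta> where \<theta>_nonzero: "\<And>i. \<theta> i \<noteq> 0"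
    and \<theta>_path: "\<And>i j. i \<in> I \<Longrightarrow> j \<in> I \<Longrightarrow> lq_path ori i j \<Longrightarrow> \<theta> j = \<theta> i * \<gamma> i j"
  proof (rule lq_path_cocycle_coboundary[where I = I and ori = ori and \<gamma> = \<gamma>])
    show "t \<in> I" if "i \<in> I" "j \<in> I" "i \<le> t" "t \<le> j" for i j t by (rule interval[OF that])
    show "\<gamma> i j \<noteq> 0" if "i \<in> I" "j \<in> I" "lq_path ori i j" for i j by (rule \<gamma>_nonzero[OF that])
    show "\<gamma> i l = \<gamma> j l * \<gamma> i j"
      if "i \<in> I" "j \<in> I" "l \<in> I" "lq_path ori i j" "lq_path ori j l" for i j l
      by (rule \<gamma>_mult[OF that])
  qed (rule that)
  show ?thesis
  proof (rule mod_iso_BL_rescale[OF BM BN, where \<mu> = "\<lambda>x. \<theta> (inv_into I phi x)"])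
    show "\<theta> (inv_into I phi x) \<noteq> 0" for x by (rule \<theta>_nonzero)
  next
    fix x y a assume "x \<in> L" "y \<in> L" and a: "a \<in> Hom C x y"
    define i j where "i = inv_into I phi x" and "j = inv_into I phi y"
    have ij: "i \<in> I" "j \<in> I"
      using bij_betw_apply[OF bij_betw_inv_into[OF phi]] \<open>x \<in> L\<close> \<open>y \<in> L\<close> by (simp_all add: i_def j_def)
    have xy: "x = phi i" "y = phi j"
      using bij_betw_inv_into_right[OF phi] \<open>x \<in> L\<close> \<open>y \<in> L\<close> by (simp_all add: i_def j_def)
    show "\<theta> (inv_into I phi x) * act_scalar C M x y a = \<theta> (inv_into I phi y) * act_scalar C N x y a"
    proof (cases "lq_path ori i j")
      case True
      then obtain c where "a = sc C c (e i j)" using span[OF ij True] a xy by blast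
      then have "act_scalar C M x y a = c * \<alpha> i j" "act_scalar C N x y a = c * \<beta> i j"
        unfolding \<alpha>_def \<beta>_def xy using e[OF ij True] phi_L[OF ij(2)]
        by (simp_all add: act_scalar_scale[OF BM] act_scalar_scale[OF BN])
      then show ?thesis
        using \<theta>_path[OF ij True] \<alpha>\<beta>_nonzero[OF ij True] by (simp add: \<gamma>_def flip: i_def j_def)
    next
      case False
      then have "a = 0" "0 \<in> Hom C x y" using no_path[OF ij] a xy by simp_all
      then show ?thesis
        using act_scalar_zero[OF BM \<open>y \<in> L\<close>] act_scalar_zero[OF BN \<open>y \<in> L\<close>] by simp
    qed
  qed
qed

theorem lemma3p2:
  fixes C :: "('k::alg_closed_field, 'o, 'm::ab_group_add) kcat"
    and G :: "('o, 'm) aut set"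
    and L :: "'o set"
    and B :: "('o, 'm, nat \<Rightarrow> 'k) kmod"
  assumes "locally_bounded C"
    and "connected_cat C"
    and "aut_group C G"
    and "acts_freely C G"
    and "is_line C L"
    and "is_BL C fscale L B"
  shows "stab_set G L = stab_mod C fscale G B"
proof -
  have kc: "is_kcat C" using assms(1) unfolding locally_bounded_def by simp
  have B: "is_module C fscale B" using assms(6) unfolding is_BL_def by simp
  have "fst g ` L = L \<longleftrightarrow> mod_iso C fscale (twist C g B) B" if "g \<in> G" for g
  proof -
    have aut: "is_aut C g" using assms(3) \<open>g \<in> G\<close> unfolding aut_group_def by simp
    show ?thesis
    proof
      assume "fst g ` L = L"
      then have "is_BL C fscale L (twist C g B)" by (rule is_BL_twist[OF kc aut assms(6)])
      then show "mod_iso C fscale (twist C g B) B" by (rule BL_unique[OF assms(5) _ assms(6)])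
    next
      assume iso: "mod_iso C fscale (twist C g B) B"
      have "Mob B (inv (fst g) x) = {0} \<longleftrightarrow> Mob B x = {0}" for x
        using mod_iso_Mob_zero_iff[OF module_fscale is_module_twist[OF kc aut B] B iso]
        by (simp add: Mob_twist)
      then show "fst g ` L = L"
        using bij_image_eq_iff_inv_mem[OF aut_bij_obj[OF aut]] is_BL_Mob_zero_iff[OF module_fscale assms(6)]
        by simp
    qed
  qed
  then show ?thesis unfolding stab_set_def stab_mod_def by blast
qed

end
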